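(* Let $\Lambda$ be a row-finite $k$-graph with no sources and let $\{t_\lambda\}_{\lambda\in\Lambda}$ be a representation of $C^*(\Lambda)$ with associated projection valued measure $P$. (a) If $\omega,\gamma\in\Lambda^\infty$ satisfy $\mathrm{Orbit}(\omega)=\mathrm{Orbit}(\gamma)$, then $P(\{\omega\})=0$ if and only if $P(\{\gamma\})=0$. (b) If the representation is purely atomic and $\Omega=\mathrm{supp}(P):=\{\omega\in\Lambda^\infty:P(\{\omega\})\neq0\}$, then $\Omega$ is a disjoint union of orbits, $\Omega=\bigsqcup_{\omega\in R}\mathrm{Orbit}(\omega)$ for a set $R\subseteq\Omega$ of orbit representatives, and $\bigoplus_{\omega\in R}P(\mathrm{Orbit}(\omega))=\mathrm{Id}_{\mathcal H}$.
   Context: A $k$-graph ($k\ge 1$) is a countable small category $\Lambda$ with a functor $d:\Lambda\to\mathbb N^k$ satisfying the factorization property: whenever $d(\lambda)=m+n$ there are unique $\mu,\nu$ with $\lambda=\mu\nu$, $d(\mu)=m$, $d(\nu)=n$. $\Lambda^0$ is the vertex set, $r,s$ range and source, $\Lambda^n=d^{-1}(n)$, $v\Lambda^n=\{\lambda\in\Lambda^n:r(\lambda)=v\}$; row-finite means each $v\Lambda^n$ finite, no sources means each $v\Lambda^n$ nonempty. $\Omega_k$ is the $k$-graph with objects $\mathbb N^k$, morphisms $(p,q)$ with $p\le q$, $d(p,q)=q-p$. An infinite path is a degree-preserving functor $x:\Omega_k\to\Lambda$; $\Lambda^\infty$ is the set of these. Shift: $\sigma^m(x)(p,q)=x(p+m,q+m)$.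 $\mathrm{Orbit}(\omega)=\{\gamma\in\Lambda^\infty:\sigma^m(\gamma)=\sigma^\ell(\omega)\text{ for some }m,\ell\in\mathbb N^k\}$. Cylinder sets $Z(\lambda)=\{x:x(0,d(\lambda))=\lambda\}$ generate the Borel $\sigma$-algebra. A representation of $C^*(\Lambda)$ is a family of partial isometries $\{t_\lambda\}$ on a Hilbert space $\mathcal H$ satisfying (CK1) $\{t_v\}_{v\in\Lambda^0}$ mutually orthogonal projections, (CK2) $t_\lambda t_\eta=t_{\lambda\eta}$ if $s(\lambda)=r(\eta)$, (CK3) $t_\lambda^*t_\lambda=t_{s(\lambda)}$, (CK4) $t_v=\sum_{\lambda\in v\Lambda^n}t_\lambda t_\lambda^*$. Its projection valued measure $P$ is the one on Borel sets of $\Lambda^\infty$ with $P(Z(\lambda))=t_\lambda t_\lambda^*$. The representation is purely atomic if there is a Borel $\Omega\subseteq\Lambda^\infty$ with $P(\Lambda^\infty\setminus\Omega)=0$, $P(\{\omega\})\neq0$ for $\omega\in\Omega$, and $\sum_{\omega\in\Omega}P(\{\omega\})=\mathrm{Id}$ strongly. *)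

theory Defs
  imports "HOL-Analysis.Analysis" "HOL-Library.Function_Algebras"
begin

text \<open>HOL-Analysis has no complex inner product spaces, so we introduce the class of
complex Hilbert spaces: a real Banach space with a compatible complex scalar multiplication
and a complex inner product inducing the norm.\<close>

class chilbert_space = banach +
  fixes cscale :: "complex \<Rightarrow> 'a \<Rightarrow> 'a"
  fixes cinner :: "'a \<Rightarrow> 'a \<Rightarrow> complex"
  assumes cscale_add_right: "cscale a (x + y) = cscale a x + cscale a y"
    and cscale_add_left: "cscale (a + b) x = cscale a x + cscale b x"
    and cscale_cscale: "cscale a (cscale b x) = cscale (a * b) x"
    and cscale_one: "cscale 1 x = x"
    and scaleR_cscale: "scaleR r x = cscale (complex_of_real r) x"
    and cinner_commute: "cinner x y = cnj (cinner y x)"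
    and cinner_add_left: "cinner (x + y) z = cinner x z + cinner y z"
    and cinner_cscale_left: "cinner (cscale c x) y = cnj c * cinner x y"
    and cinner_self: "cinner x x = complex_of_real ((norm x)\<^sup>2)"

definition bounded_clinear :: "('h::chilbert_space \<Rightarrow> 'h) \<Rightarrow> bool" where
  "bounded_clinear T \<longleftrightarrow> (\<forall>x y. T (x + y) = T x + T y) \<and> (\<forall>c x. T (cscale c x) = cscale c (T x))
     \<and> (\<exists>K. \<forall>x. norm (T x) \<le> K * norm x)"

text \<open>The adjoint (exists and is unique for bounded operators).\<close>
definition adj :: "('h::chilbert_space \<Rightarrow> 'h) \<Rightarrow> 'h \<Rightarrow> 'h" where
  "adj T = (SOME S. \<forall>x y. cinner (T x) y = cinner x (S y))"

definition is_proj :: "('h::chilbert_space \<Rightarrow> 'h) \<Rightarrow> bool" where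
  "is_proj T \<longleftrightarrow> bounded_clinear T \<and> T \<circ> T = T \<and> (\<forall>x y. cinner (T x) y = cinner x (T y))"

text \<open>Degrees live in \<open>\<nat>^k\<close>, modelled as \<open>'k \<Rightarrow> nat\<close> for a finite index type \<open>'k\<close>
(so \<open>k = CARD('k) \<ge> 1\<close>), with pointwise order and addition.
Objects are identified with their identity morphisms.\<close>

record ('a, 'k) kgraph =
  Mor :: "'a set"
  rg  :: "'a \<Rightarrow> 'a"
  sr  :: "'a \<Rightarrow> 'a"
  cmp :: "'a \<Rightarrow> 'a \<Rightarrow> 'a"
  dg  :: "'a \<Rightarrow> 'k \<Rightarrow> nat"

definition verts :: "('a, 'k) kgraph \<Rightarrow> 'a set" where
  "verts L = rg L ` Mor L"

definition is_kgraph :: "('a, 'k::finite) kgraph \<Rightarrow> bool" where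
  "is_kgraph L \<longleftrightarrow>
     countable (Mor L) \<and>
     (\<forall>l\<in>Mor L. rg L l \<in> Mor L \<and> sr L l \<in> Mor L \<and>
        rg L (rg L l) = rg L l \<and> sr L (rg L l) = rg L l \<and>
        rg L (sr L l) = sr L l \<and> sr L (sr L l) = sr L l \<and>
        cmp L (rg L l) l = l \<and> cmp L l (sr L l) = l) \<and>
     (\<forall>l\<in>Mor L. \<forall>m\<in>Mor L. sr L l = rg L m \<longrightarrow>
        cmp L l m \<in> Mor L \<and> rg L (cmp L l m) = rg L l \<and> sr L (cmp L l m) = sr L m \<and>
        dg L (cmp L l m) = dg L l + dg L m) \<and>
     (\<forall>l\<in>Mor L. \<forall>m\<in>Mor L. \<forall>n\<in>Mor L. sr L l = rg L m \<and> sr L m = rg L n \<longrightarrow>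
        cmp L (cmp L l m) n = cmp L l (cmp L m n)) \<and>
     (\<forall>l\<in>Mor L. \<forall>m n. dg L l = m + n \<longrightarrow>
        (\<exists>!p. fst p \<in> Mor L \<and> snd p \<in> Mor L \<and> sr L (fst p) = rg L (snd p) \<and>
              cmp L (fst p) (snd p) = l \<and> dg L (fst p) = m \<and> dg L (snd p) = n))"

definition vpaths :: "('a, 'k) kgraph \<Rightarrow> 'a \<Rightarrow> ('k \<Rightarrow> nat) \<Rightarrow> 'a set" where
  "vpaths L v n = {l \<in> Mor L. rg L l = v \<and> dg L l = n}"

definition row_finite :: "('a, 'k) kgraph \<Rightarrow> bool" where
  "row_finite L \<longleftrightarrow> (\<forall>v\<in>verts L. \<forall>n. finite (vpaths L v n))"

definition no_sources :: "('a, 'k) kgraph \<Rightarrow> bool" where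
  "no_sources L \<longleftrightarrow> (\<forall>v\<in>verts L. \<forall>n. vpaths L v n \<noteq> {})"

text \<open>An infinite path is a degree preserving functor \<open>\<Omega>_k \<rightarrow> \<Lambda>\<close>, given on the morphisms
\<open>(p,q)\<close>, \<open>p \<le> q\<close>, of \<open>\<Omega>_k\<close>; it is extended by \<open>undefined\<close> off this set so that paths are
determined by their values on \<open>\<Omega>_k\<close>.\<close>

type_synonym ('a, 'k) ipath = "('k \<Rightarrow> nat) \<times> ('k \<Rightarrow> nat) \<Rightarrow> 'a"

definition infpaths :: "('a, 'k::finite) kgraph \<Rightarrow> ('a, 'k) ipath set" where
  "infpaths L = {x.
     (\<forall>p q. p \<le> q \<longrightarrow> x (p, q) \<in> Mor L \<and> dg L (x (p, q)) = q - p \<and>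
        rg L (x (p, q)) = x (p, p) \<and> sr L (x (p, q)) = x (q, q)) \<and>
     (\<forall>p. x (p, p) \<in> verts L) \<and>
     (\<forall>p q n. p \<le> q \<and> q \<le> n \<longrightarrow> cmp L (x (p, q)) (x (q, n)) = x (p, n)) \<and>
     (\<forall>p q. \<not> p \<le> q \<longrightarrow> x (p, q) = undefined)}"

definition shift :: "('k \<Rightarrow> nat) \<Rightarrow> ('a, 'k) ipath \<Rightarrow> ('a, 'k) ipath" where
  "shift m x = (\<lambda>(p, q). x (p + m, q + m))"

definition orbit :: "('a, 'k::finite) kgraph \<Rightarrow> ('a, 'k) ipath \<Rightarrow> ('a, 'k) ipath set" where
  "orbit L w = {g \<in> infpaths L. \<exists>m l. shift m g = shift l w}"

definition cyl :: "('a, 'k::finite) kgraph \<Rightarrow> 'a \<Rightarrow> ('a, 'k) ipath set" where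
  "cyl L l = {x \<in> infpaths L. x (0, dg L l) = l}"

definition borel_paths :: "('a, 'k::finite) kgraph \<Rightarrow> ('a, 'k) ipath set set" where
  "borel_paths L = sigma_sets (infpaths L) (cyl L ` Mor L)"

definition ck_rep :: "('a, 'k::finite) kgraph \<Rightarrow> ('a \<Rightarrow> 'h::chilbert_space \<Rightarrow> 'h) \<Rightarrow> bool" where
  "ck_rep L t \<longleftrightarrow>
     (\<forall>l\<in>Mor L. bounded_clinear (t l)) \<and>
     (\<forall>v\<in>verts L. is_proj (t v)) \<and>
     (\<forall>v\<in>verts L. \<forall>w\<in>verts L. v \<noteq> w \<longrightarrow> t v \<circ> t w = (\<lambda>_. 0)) \<and>
     (\<forall>l\<in>Mor L. \<forall>e\<in>Mor L. sr L l = rg L e \<longrightarrow> t l \<circ> t e = t (cmp L l e)) \<and>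
     (\<forall>l\<in>Mor L. adj (t l) \<circ> t l = t (sr L l)) \<and>
     (\<forall>v\<in>verts L. \<forall>n h. t v h = (\<Sum>l\<in>vpaths L v n. t l (adj (t l) h)))"

definition is_pvm :: "('a, 'k::finite) kgraph \<Rightarrow> (('a, 'k) ipath set \<Rightarrow> 'h::chilbert_space \<Rightarrow> 'h) \<Rightarrow> bool" where
  "is_pvm L P \<longleftrightarrow>
     (\<forall>E\<in>borel_paths L. is_proj (P E)) \<and> P {} = (\<lambda>_. 0) \<and>
     (\<forall>A :: nat \<Rightarrow> ('a, 'k) ipath set. range A \<subseteq> borel_paths L \<and> disjoint_family A \<longrightarrow>
        (\<forall>h. (\<lambda>i. P (A i) h) sums P (\<Union>i. A i) h))"

definition rep_pvm :: "('a, 'k::finite) kgraph \<Rightarrow> ('a \<Rightarrow> 'h::chilbert_space \<Rightarrow> 'h)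
    \<Rightarrow> (('a, 'k) ipath set \<Rightarrow> 'h \<Rightarrow> 'h) \<Rightarrow> bool" where
  "rep_pvm L t P \<longleftrightarrow> is_pvm L P \<and> (\<forall>l\<in>Mor L. P (cyl L l) = t l \<circ> adj (t l))"

definition purely_atomic :: "('a, 'k::finite) kgraph \<Rightarrow> (('a, 'k) ipath set \<Rightarrow> 'h::chilbert_space \<Rightarrow> 'h) \<Rightarrow> bool" where
  "purely_atomic L P \<longleftrightarrow> (\<exists>Om\<in>borel_paths L.
     P (infpaths L - Om) = (\<lambda>_. 0) \<and> (\<forall>w\<in>Om. P {w} \<noteq> (\<lambda>_. 0)) \<and>
     (\<forall>h. ((\<lambda>w. P {w} h) has_sum h) Om))"

definition pvm_supp :: "('a, 'k::finite) kgraph \<Rightarrow> (('a, 'k) ipath set \<Rightarrow> 'h::chilbert_space \<Rightarrow> 'h) \<Rightarrow> ('a, 'k) ipath set" where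
  "pvm_supp L P = {w \<in> infpaths L. P {w} \<noteq> (\<lambda>_. 0)}"

end

theory Submission
  imports Defs
begin

text \<open>Let \<open>x\<close> be an infinite path, \<open>\<lambda> = x(0,m)\<close> and \<open>\<mu>\<^sub>n = x(m, m+n)\<close>, so that
\<open>x(0, m+n) = \<lambda>\<mu>\<^sub>n\<close>. The Cuntz-Krieger relations give
\<open>P(Z(\<lambda>\<mu>\<^sub>n)) = t\<^sub>\<lambda> P(Z(\<mu>\<^sub>n)) t\<^sub>\<lambda>\<^sup>* P(Z(\<lambda>\<mu>\<^sub>n))\<close> and
\<open>P(Z(\<lambda>\<mu>\<^sub>n)) t\<^sub>\<lambda> P(Z(\<mu>\<^sub>n)) = t\<^sub>\<lambda> P(Z(\<mu>\<^sub>n))\<close>.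
The cylinders \<open>Z(\<lambda>\<mu>\<^sub>n)\<close> decrease to \<open>{x}\<close> and the \<open>Z(\<mu>\<^sub>n)\<close> to \<open>{\<sigma>\<^sup>m x}\<close>, so by
strong continuity of \<open>P\<close> the first identity shows that \<open>P({x})\<close> vanishes if \<open>P({\<sigma>\<^sup>m x})\<close>
does, and the second that \<open>t\<^sub>\<lambda>\<close> maps the range of \<open>P({\<sigma>\<^sup>m x})\<close> into that of \<open>P({x})\<close>;
as \<open>t\<^sub>\<lambda>\<close> is isometric on the range of \<open>t\<^bsub>s(\<lambda>)\<^esub>\<close>, which contains the range of
\<open>P({\<sigma>\<^sup>m x})\<close>, the converse follows. Two paths in one orbit have a common shift, which
gives (a).

For (b), orbits are countable (a path is determined by an initial segment and a shift of
itself), hence Borel, and by (a) they partition the support of a purely atomic \<open>P\<close>.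
Grouping the unconditionally convergent sum \<open>\<Sum>\<^sub>\<omega> P({\<omega>})h = h\<close> by orbits and using
countable additivity of \<open>P\<close> on each orbit gives \<open>\<Sum>\<^sub>\<omega>\<^sub>\<in>\<^sub>R P(Orbit(\<omega>))h = h\<close>.\<close>

section \<open>Factorization and infinite paths\<close>

lemma kgraph_unit_laws:
  assumes "is_kgraph L" and "l \<in> Mor L"
  shows "rg L l \<in> Mor L" "sr L l \<in> Mor L" "sr L (rg L l) = rg L l" "rg L (sr L l) = sr L l"
    "cmp L (rg L l) l = l" "cmp L l (sr L l) = l"
  using assms unfolding is_kgraph_def by blast+

lemma kgraph_cmp:
  assumes "is_kgraph L" and "l \<in> Mor L" "m \<in> Mor L" "sr L l = rg L m"
  shows "cmp L l m \<in> Mor L" "rg L (cmp L l m) = rg L l" "sr L (cmp L l m) = sr L m"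
  using assms unfolding is_kgraph_def by blast+

lemma kgraph_factorization_unique:
  assumes kg: "is_kgraph L"
    and "a \<in> Mor L" "b \<in> Mor L" "sr L a = rg L b"
    and "a' \<in> Mor L" "b' \<in> Mor L" "sr L a' = rg L b'"
    and "cmp L a b = cmp L a' b'" "dg L a = dg L a'" "dg L b = dg L b'"
  shows "a = a' \<and> b = b'"
proof -
  have ab: "cmp L a b \<in> Mor L" "dg L (cmp L a b) = dg L a + dg L b"
    using assms(1-4) unfolding is_kgraph_def by blast+
  have "\<exists>!p. fst p \<in> Mor L \<and> snd p \<in> Mor L \<and> sr L (fst p) = rg L (snd p) \<and>
          cmp L (fst p) (snd p) = cmp L a b \<and> dg L (fst p) = dg L a \<and> dg L (snd p) = dg L b"
    using kg ab unfolding is_kgraph_def by blast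
  then have "(a, b) = (a', b')"
    using assms by (elim ex1E) (metis fst_conv snd_conv)
  then show ?thesis by simp
qed

lemma infpathsD:
  assumes "x \<in> infpaths L"
  shows "p \<le> q \<Longrightarrow> x (p, q) \<in> Mor L"
    and "p \<le> q \<Longrightarrow> dg L (x (p, q)) = q - p"
    and "p \<le> q \<Longrightarrow> rg L (x (p, q)) = x (p, p)"
    and "p \<le> q \<Longrightarrow> sr L (x (p, q)) = x (q, q)"
    and "p \<le> q \<Longrightarrow> q \<le> n \<Longrightarrow> cmp L (x (p, q)) (x (q, n)) = x (p, n)"
    and "x (p, p) \<in> verts L"
    and "\<not> p \<le> q \<Longrightarrow> x (p, q) = undefined"
  using assms unfolding infpaths_def by blast+

lemma infpath_initial_factor:
  fixes x :: "('a, 'k::finite) ipath"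
  assumes "x \<in> infpaths L"
  shows "x (0, m) \<in> Mor L" "x (m, q + m) \<in> Mor L" "sr L (x (0, m)) = rg L (x (m, q + m))"
    "cmp L (x (0, m)) (x (m, q + m)) = x (0, q + m)"
proof -
  have le: "0 \<le> m" "m \<le> q + m" by (simp_all add: le_fun_def)
  show "x (0, m) \<in> Mor L" "x (m, q + m) \<in> Mor L" "sr L (x (0, m)) = rg L (x (m, q + m))"
    "cmp L (x (0, m)) (x (m, q + m)) = x (0, q + m)"
    using infpathsD[OF assms] le by simp_all
qed

lemma infpath_subsegments_eq:
  assumes kg: "is_kgraph L" and x: "x \<in> infpaths L" and y: "y \<in> infpaths L"
    and "a \<le> b" "b \<le> c" and "x (a, c) = y (a, c)"
  shows "x (a, b) = y (a, b) \<and> x (b, c) = y (b, c)"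
  using assms infpathsD[OF x] infpathsD[OF y]
  by (intro kgraph_factorization_unique[OF kg]) (metis order_trans)+

lemma infpath_eqI:
  assumes kg: "is_kgraph L" and x: "x \<in> infpaths L" and y: "y \<in> infpaths L"
    and cofinal: "\<And>Q. \<exists>Q'. Q \<le> Q' \<and> x (0, Q') = y (0, Q')"
  shows "x = y"
proof -
  have "x (p, q) = y (p, q)" if "p \<le> q" for p q
  proof -
    obtain Q' where Q': "q \<le> Q'" "x (0, Q') = y (0, Q')" using cofinal by blast
    have "0 \<le> p" "0 \<le> q" by (simp_all add: le_fun_def)
    then show ?thesis
      using infpath_subsegments_eq[OF kg x y _ Q'] infpath_subsegments_eq[OF kg x y _ that] by blast
  qed
  moreover have "x (p, q) = y (p, q)" if "\<not> p \<le> q" for p q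
    using infpathsD(7)[OF x that] infpathsD(7)[OF y that] by simp
  ultimately show ?thesis by (intro ext) (metis surj_pair)
qed

lemma shift_in_infpaths:
  fixes x :: "('a, 'k::finite) ipath"
  assumes x: "x \<in> infpaths L"
  shows "shift m x \<in> infpaths L"
proof -
  have "p + m \<le> q + m \<longleftrightarrow> p \<le> q" for p q :: "'k \<Rightarrow> nat" by (simp add: le_fun_def)
  moreover have "q + m - (p + m) = q - p" for p q :: "'k \<Rightarrow> nat" by (simp add: fun_eq_iff)
  ultimately show ?thesis
    using infpathsD[OF x] unfolding infpaths_def shift_def by auto
qed

lemma shift_shift: "shift a (shift b x) = shift (a + b) x"
  by (simp add: shift_def add.assoc add.commute add.left_commute)

lemma infpath_eq_if_shift_eq:
  assumes kg: "is_kgraph L" and x: "x \<in> infpaths L" and y: "y \<in> infpaths L"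
    and init: "x (0, m) = y (0, m)" and tail: "shift m x = shift m y"
  shows "x = y"
proof (rule infpath_eqI[OF kg x y])
  fix Q
  have "x (m, Q + m) = y (m, Q + m)"
    using fun_cong[OF tail, of "(0, Q)"] by (simp add: shift_def)
  then have "x (0, Q + m) = y (0, Q + m)"
    using infpath_initial_factor(4)[OF x] infpath_initial_factor(4)[OF y] init by metis
  moreover have "Q \<le> Q + m" by (simp add: le_fun_def)
  ultimately show "\<exists>Q'. Q \<le> Q' \<and> x (0, Q') = y (0, Q')" by blast
qed

section \<open>Orbits\<close>

lemma self_mem_orbit: "w \<in> infpaths L \<Longrightarrow> w \<in> orbit L w"
  unfolding orbit_def by (auto intro!: exI[of _ 0] simp: shift_def)

lemma orbit_subset_infpaths: "orbit L w \<subseteq> infpaths L"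
  unfolding orbit_def by blast

lemma mem_orbit_sym: "g \<in> orbit L w \<Longrightarrow> w \<in> infpaths L \<Longrightarrow> w \<in> orbit L g"
  unfolding orbit_def by (auto intro: sym)

lemma mem_orbit_trans:
  assumes "g \<in> orbit L w" "u \<in> orbit L g"
  shows "u \<in> orbit L w"
proof -
  obtain m l where "shift m g = shift l w" using assms(1) unfolding orbit_def by blast
  moreover obtain m' l' where "u \<in> infpaths L" "shift m' u = shift l' g"
    using assms(2) unfolding orbit_def by blast
  ultimately have "u \<in> infpaths L" "shift (m + m') u = shift (l' + l) w"
    by (metis add.commute shift_shift)+
  then show ?thesis unfolding orbit_def by blast
qed

lemma orbit_eq_if_mem: "g \<in> orbit L w \<Longrightarrow> w \<in> infpaths L \<Longrightarrow> orbit L g = orbit L w"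
  using mem_orbit_trans mem_orbit_sym by blast

lemma countable_orbit:
  fixes L :: "('a, 'k::finite) kgraph"
  assumes kg: "is_kgraph L"
  shows "countable (orbit L w)"
proof -
  have "\<forall>g\<in>orbit L w. \<exists>p. shift (fst p) g = shift (snd p) w" unfolding orbit_def by auto
  then obtain shifts where
    shifts: "\<And>g. g \<in> orbit L w \<Longrightarrow> shift (fst (shifts g)) g = shift (snd (shifts g)) w"
    by metis
  define code where "code g = (g (0, fst (shifts g)), shifts g)" for g
  have "inj_on code (orbit L w)"
  proof (rule inj_onI)
    fix g g' assume g: "g \<in> orbit L w" and g': "g' \<in> orbit L w" and "code g = code g'"
    then have "g (0, fst (shifts g)) = g' (0, fst (shifts g))" "shifts g = shifts g'"
      unfolding code_def by auto
    moreover have "shift (fst (shifts g)) g = shift (fst (shifts g)) g'"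
      using shifts[OF g] shifts[OF g'] \<open>shifts g = shifts g'\<close> by simp
    ultimately show "g = g'"
      using infpath_eq_if_shift_eq[OF kg] g g' orbit_subset_infpaths by blast
  qed
  moreover have "code ` orbit L w \<subseteq> Mor L \<times> UNIV"
    using orbit_subset_infpaths infpathsD(1) unfolding code_def by (fastforce simp: le_fun_def)
  moreover have "countable (Mor L \<times> (UNIV :: (('k \<Rightarrow> nat) \<times> ('k \<Rightarrow> nat)) set))"
    using kg unfolding is_kgraph_def by simp
  ultimately show ?thesis by (meson countable_image_inj_on countable_subset)
qed

section \<open>Borel sets of paths\<close>

lemma sigma_algebra_borel_paths: "sigma_algebra (infpaths L) (borel_paths L)"
  unfolding borel_paths_def by (rule sigma_algebra_sigma_sets) (auto simp: cyl_def)

lemma borel_paths_subset: "E \<in> borel_paths L \<Longrightarrow> E \<subseteq> infpaths L"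
  unfolding borel_paths_def by (rule sigma_sets_into_sp) (auto simp: cyl_def)

lemma cyl_in_borel_paths: "l \<in> Mor L \<Longrightarrow> cyl L l \<in> borel_paths L"
  unfolding borel_paths_def by (rule sigma_sets.Basic) auto

lemma cyl_infpath:
  assumes x: "x \<in> infpaths L"
  shows "cyl L (x (0, q)) = {y \<in> infpaths L. y (0, q) = x (0, q)}"
  using infpathsD(2)[OF x, of 0 q] unfolding cyl_def by (simp add: le_fun_def)

lemma infpath_in_cyl: "x \<in> infpaths L \<Longrightarrow> x \<in> cyl L (x (0, q))"
  by (simp add: cyl_infpath)

lemma cyl_infpath_in_borel_paths: "x \<in> infpaths L \<Longrightarrow> cyl L (x (0, q)) \<in> borel_paths L"
  using infpathsD(1)[of x L 0 q] by (intro cyl_in_borel_paths) (simp add: le_fun_def)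

lemma cyl_infpath_antimono:
  assumes kg: "is_kgraph L" and x: "x \<in> infpaths L" and "q \<le> q'"
  shows "cyl L (x (0, q')) \<subseteq> cyl L (x (0, q))"
  using infpath_subsegments_eq[OF kg _ x _ \<open>q \<le> q'\<close>] unfolding cyl_infpath[OF x]
  by (auto simp: le_fun_def)

lemma INT_cyl_infpath:
  assumes kg: "is_kgraph L" and x: "x \<in> infpaths L"
  shows "(\<Inter>n. cyl L (x (0, (\<lambda>_. n) + c))) = {x}"
proof (intro equalityI subsetI)
  fix y assume "y \<in> (\<Inter>n. cyl L (x (0, (\<lambda>_. n) + c)))"
  then have y: "y \<in> infpaths L" "\<And>n. y (0, (\<lambda>_. n) + c) = x (0, (\<lambda>_. n) + c)"
    unfolding cyl_infpath[OF x] by auto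
  have "Q \<le> (\<lambda>_. \<Sum>i\<in>UNIV. Q i) + c" for Q :: "'b \<Rightarrow> nat"
    using member_le_sum[of _ UNIV Q] by (simp add: le_fun_def trans_le_add1)
  then have "y = x" using y by (intro infpath_eqI[OF kg y(1) x]) blast
  then show "y \<in> {x}" by simp
qed (use x infpath_in_cyl in auto)

lemma singleton_in_borel_paths:
  assumes kg: "is_kgraph L" and x: "x \<in> infpaths L"
  shows "{x} \<in> borel_paths L"
proof -
  interpret sigma_algebra "infpaths L" "borel_paths L" by (rule sigma_algebra_borel_paths)
  have "(\<Inter>n. cyl L (x (0, (\<lambda>_. n) + 0))) \<in> borel_paths L"
    using cyl_infpath_in_borel_paths[OF x] by auto
  then show ?thesis unfolding INT_cyl_infpath[OF kg x] .
qed

lemma countable_in_borel_paths: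
  assumes kg: "is_kgraph L" and "countable A" "A \<subseteq> infpaths L"
  shows "A \<in> borel_paths L"
proof -
  interpret sigma_algebra "infpaths L" "borel_paths L" by (rule sigma_algebra_borel_paths)
  have "(\<Union>x\<in>A. {x}) \<in> borel_paths L"
    using assms singleton_in_borel_paths[OF kg] by (intro countable_UN') auto
  then show ?thesis by simp
qed

lemma orbit_in_borel_paths:
  assumes "is_kgraph L"
  shows "orbit L w \<in> borel_paths L"
  using countable_in_borel_paths[OF assms countable_orbit[OF assms] orbit_subset_infpaths] .

lemma bounded_clinear_imp_bounded_linear:
  assumes "bounded_clinear T"
  shows "bounded_linear T"
proof -
  obtain K where K: "\<And>x. norm (T x) \<le> K * norm x"
    using assms unfolding bounded_clinear_def by blast
  show ?thesis
  proof (rule bounded_linear_intro)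
    show "T (x + y) = T x + T y" for x y using assms unfolding bounded_clinear_def by blast
    show "T (scaleR r x) = scaleR r (T x)" for r x
      using assms unfolding bounded_clinear_def by (simp add: scaleR_cscale)
    show "norm (T x) \<le> norm x * K" for x using K[of x] by (simp add: mult.commute)
  qed
qed

lemma is_proj_bounded_linear: "is_proj T \<Longrightarrow> bounded_linear T"
  unfolding is_proj_def using bounded_clinear_imp_bounded_linear by blast

lemma is_proj_idem: "is_proj T \<Longrightarrow> T (T x) = T x"
  unfolding is_proj_def by (metis comp_apply)

text \<open>Idempotence of \<open>E + F\<close> forces \<open>EF + FE = 0\<close>; multiplying by \<open>E\<close> on either side shows
\<open>EF = FE\<close>, hence \<open>2EF = 0\<close>.\<close>

lemma is_proj_sum_orthogonal:
  assumes E: "is_proj E" and F: "is_proj F" and G: "is_proj G"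
    and sum: "\<And>h. G h = E h + F h"
  shows "E (F h) = 0"
proof -
  interpret e: bounded_linear E using is_proj_bounded_linear[OF E] .
  interpret f: bounded_linear F using is_proj_bounded_linear[OF F] .
  have anti: "E (F x) + F (E x) = 0" for x
  proof -
    have "E (E x + F x) + F (E x + F x) = E x + F x"
      using is_proj_idem[OF G, of x] by (simp add: sum)
    then show ?thesis by (simp add: e.add f.add is_proj_idem[OF E] is_proj_idem[OF F] algebra_simps)
  qed
  have "E (F h) + E (F (E h)) = 0"
    using arg_cong[OF anti[of h], of E] by (simp add: e.add is_proj_idem[OF E])
  moreover have "E (F (E h)) + F (E h) = 0"
    using anti[of "E h"] by (simp add: is_proj_idem[OF E])
  ultimately have "E (F h) = F (E h)" by (metis add.commute add_left_cancel)
  with anti[of h] have "(2::real) *\<^sub>R E (F h) = 0" by (simp add: scaleR_2)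
  then show ?thesis by simp
qed

section \<open>Projection valued measures\<close>

lemma is_pvm_proj: "is_pvm L P \<Longrightarrow> E \<in> borel_paths L \<Longrightarrow> is_proj (P E)"
  unfolding is_pvm_def by blast

lemma is_pvm_empty: "is_pvm L P \<Longrightarrow> P {} h = 0"
  unfolding is_pvm_def by simp

lemma is_pvm_sums:
  "is_pvm L P \<Longrightarrow> range A \<subseteq> borel_paths L \<Longrightarrow> disjoint_family A \<Longrightarrow>
    (\<lambda>i. P (A i) h) sums P (\<Union>i. A i) h"
  unfolding is_pvm_def by blast

lemma pvm_Un:
  assumes pvm: "is_pvm L P" and A: "A \<in> borel_paths L" and B: "B \<in> borel_paths L"
    and disj: "A \<inter> B = {}"
  shows "P (A \<union> B) h = P A h + P B h"
proof -
  interpret sigma_algebra "infpaths L" "borel_paths L" by (rule sigma_algebra_borel_paths)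
  define F where "F i = (if i = 0 then A else if i = 1 then B else {})" for i :: nat
  have "range F \<subseteq> borel_paths L" "disjoint_family F" "(\<Union>i. F i) = A \<union> B"
    using A B disj unfolding F_def disjoint_family_on_def by (auto split: if_splits)
  then have "(\<lambda>i. P (F i) h) sums P (A \<union> B) h" using is_pvm_sums[OF pvm] by metis
  moreover have "(\<lambda>i. P (F i) h) sums (\<Sum>i\<in>{0, 1}. P (F i) h)"
    by (rule sums_finite) (auto simp: F_def is_pvm_empty[OF pvm])
  ultimately show ?thesis by (simp add: sums_unique2 F_def)
qed

lemma pvm_orthogonal:
  assumes pvm: "is_pvm L P" and A: "A \<in> borel_paths L" and B: "B \<in> borel_paths L"
    and disj: "A \<inter> B = {}"
  shows "P A (P B h) = 0"
proof -
  interpret sigma_algebra "infpaths L" "borel_paths L" by (rule sigma_algebra_borel_paths)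
  show ?thesis
    using is_proj_sum_orthogonal is_pvm_proj[OF pvm] pvm_Un[OF pvm A B disj] A B by blast
qed

lemma pvm_absorb_subset:
  assumes pvm: "is_pvm L P" and A: "A \<in> borel_paths L" and B: "B \<in> borel_paths L"
    and "B \<subseteq> A"
  shows "P A (P B h) = P B h"
proof -
  interpret sigma_algebra "infpaths L" "borel_paths L" by (rule sigma_algebra_borel_paths)
  have AB: "A - B \<in> borel_paths L" "B \<inter> (A - B) = {}" "(A - B) \<inter> B = {}"
    using A B by auto
  have "A = B \<union> (A - B)" using \<open>B \<subseteq> A\<close> by blast
  then have "P A (P B h) = P B (P B h) + P (A - B) (P B h)"
    using pvm_Un[OF pvm B AB(1,2)] by metis
  also have "\<dots> = P B h"
    using is_proj_idem[OF is_pvm_proj[OF pvm B]] pvm_orthogonal[OF pvm AB(1) B AB(3)] by simp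
  finally show ?thesis .
qed

lemma pvm_null_subset:
  assumes pvm: "is_pvm L P" and "A \<in> borel_paths L" "B \<in> borel_paths L"
    and "B \<subseteq> A" and "P A = (\<lambda>_. 0)"
  shows "P B = (\<lambda>_. 0)"
  using pvm_absorb_subset[OF assms(1-4)] assms(5) by fastforce

lemma pvm_continuous_from_below:
  assumes pvm: "is_pvm L P" and A: "\<And>n. A n \<in> borel_paths L" and inc: "incseq A"
  shows "(\<lambda>n. P (A n) h) \<longlonglongrightarrow> P (\<Union>n. A n) h"
proof -
  interpret sigma_algebra "infpaths L" "borel_paths L" by (rule sigma_algebra_borel_paths)
  have "range (disjointed A) \<subseteq> borel_paths L" using A by (intro range_disjointed_sets) auto
  then have "(\<lambda>i. P (disjointed A i) h) sums P (\<Union>n. A n) h"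
    using is_pvm_sums[OF pvm _ disjoint_family_disjointed] by (simp add: UN_disjointed_eq)
  then have "(\<lambda>n. \<Sum>i<Suc n. P (disjointed A i) h) \<longlonglongrightarrow> P (\<Union>n. A n) h"
    unfolding sums_def by (rule LIMSEQ_Suc)
  moreover have "(\<Sum>i<Suc n. P (disjointed A i) h) = P (A n) h" for n
  proof (induction n)
    case (Suc n)
    have "A (Suc n) = A n \<union> (A (Suc n) - A n)" using inc by (auto simp: incseq_Suc_iff)
    moreover have "A (Suc n) - A n \<in> borel_paths L" using A by auto
    ultimately have "P (A (Suc n)) h = P (A n) h + P (A (Suc n) - A n) h"
      using pvm_Un[OF pvm A] by (metis Diff_disjoint)
    then show ?case using Suc.IH inc by (simp add: disjointed_mono)
  qed simp
  ultimately show ?thesis by simp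
qed

lemma pvm_continuous_from_above:
  assumes pvm: "is_pvm L P" and C: "\<And>n. C n \<in> borel_paths L" and dec: "decseq C"
  shows "(\<lambda>n. P (C n) h) \<longlonglongrightarrow> P (\<Inter>n. C n) h"
proof -
  interpret sigma_algebra "infpaths L" "borel_paths L" by (rule sigma_algebra_borel_paths)
  have split: "P (C 0) h = P (C 0 - D) h + P D h" if "D \<in> borel_paths L" "D \<subseteq> C 0" for D
  proof -
    have "C 0 = (C 0 - D) \<union> D" "(C 0 - D) \<inter> D = {}" using that(2) by auto
    then show ?thesis using pvm_Un[OF pvm Diff[OF C that(1)] that(1)] by metis
  qed
  have INT: "(\<Inter>n. C n) \<in> borel_paths L" using C by auto
  have "(\<lambda>n. P (C 0 - C n) h) \<longlonglongrightarrow> P (\<Union>n. C 0 - C n) h"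
    using C dec by (intro pvm_continuous_from_below[OF pvm]) (auto simp: incseq_def decseq_def)
  then have "(\<lambda>n. P (C 0) h - P (C 0 - C n) h) \<longlonglongrightarrow> P (C 0) h - P (C 0 - (\<Inter>n. C n)) h"
    by (intro tendsto_diff tendsto_const) simp
  moreover have "P (C 0) h - P (C 0 - C n) h = P (C n) h" for n
    using split[of "C n"] C dec by (simp add: decseq_def)
  moreover have "P (C 0) h - P (C 0 - (\<Inter>n. C n)) h = P (\<Inter>n. C n) h"
    using split[OF INT] by (simp add: INT_lower)
  ultimately show ?thesis by simp
qed

lemma pvm_cyl_tendsto_singleton:
  assumes kg: "is_kgraph L" and pvm: "is_pvm L P" and x: "x \<in> infpaths L"
  shows "(\<lambda>n. P (cyl L (x (0, (\<lambda>_. n) + c))) h) \<longlonglongrightarrow> P {x} h"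
proof -
  have "decseq (\<lambda>n. cyl L (x (0, (\<lambda>_. n) + c)))"
    unfolding decseq_def by (auto intro!: cyl_infpath_antimono[OF kg x] simp: le_fun_def)
  then show ?thesis
    using pvm_continuous_from_above[OF pvm cyl_infpath_in_borel_paths[OF x]] INT_cyl_infpath[OF kg x]
    by metis
qed

lemma pvm_singleton_absorb_cyl:
  assumes kg: "is_kgraph L" and pvm: "is_pvm L P" and x: "x \<in> infpaths L"
  shows "P (cyl L (x (0, q))) (P {x} h) = P {x} h"
  using pvm_absorb_subset[OF pvm cyl_infpath_in_borel_paths[OF x] singleton_in_borel_paths[OF kg x]]
    infpath_in_cyl[OF x] by simp

lemma pvm_finite_sum_singletons:
  assumes kg: "is_kgraph L" and pvm: "is_pvm L P" and "finite A" and "A \<subseteq> infpaths L"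
  shows "P A h = (\<Sum>x\<in>A. P {x} h)"
  using \<open>finite A\<close> \<open>A \<subseteq> infpaths L\<close>
proof (induction A rule: finite_induct)
  case (insert x A)
  then have "{x} \<in> borel_paths L" "A \<in> borel_paths L"
    by (auto intro: singleton_in_borel_paths[OF kg] countable_in_borel_paths[OF kg] countable_finite)
  then show ?case using pvm_Un[OF pvm, of "{x}" A] insert by simp
qed (simp add: is_pvm_empty[OF pvm])

lemma pvm_countable_has_sum_singletons:
  assumes kg: "is_kgraph L" and pvm: "is_pvm L P" and "countable A" and A: "A \<subseteq> infpaths L"
    and "(\<lambda>x. P {x} h) summable_on A"
  shows "((\<lambda>x. P {x} h) has_sum P A h) A"
proof (cases "finite A")
  case True
  then show ?thesis using pvm_finite_sum_singletons[OF kg pvm True A] by simp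
next
  case False
  have bij: "bij_betw (from_nat_into A) UNIV A"
    using bij_betw_from_nat_into[OF \<open>countable A\<close> False] .
  obtain s where s: "((\<lambda>x. P {x} h) has_sum s) A"
    using \<open>(\<lambda>x. P {x} h) summable_on A\<close> unfolding summable_on_def by blast
  then have "(\<lambda>i. P {from_nat_into A i} h) sums s"
    using has_sum_reindex_bij_betw[OF bij, of "\<lambda>x. P {x} h"] by (intro has_sum_imp_sums) simp
  moreover have "(\<lambda>i. P {from_nat_into A i} h) sums P A h"
  proof -
    have "range (\<lambda>i. {from_nat_into A i}) \<subseteq> borel_paths L"
      using bij A singleton_in_borel_paths[OF kg] unfolding bij_betw_def by blast
    moreover have "disjoint_family (\<lambda>i. {from_nat_into A i})"
      using bij unfolding bij_betw_def disjoint_family_on_def inj_on_def by auto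
    moreover have "(\<Union>i. {from_nat_into A i}) = A" using bij unfolding bij_betw_def by auto
    ultimately show ?thesis using is_pvm_sums[OF pvm] by metis
  qed
  ultimately show ?thesis using s sums_unique2 by metis
qed

lemma has_sum_UnionD:
  fixes f :: "'b \<Rightarrow> 'a::{topological_comm_monoid_add, t3_space}"
  assumes "(f has_sum s) (\<Union>x\<in>A. B x)" and disj: "disjoint_family_on B A"
    and "\<And>x. x \<in> A \<Longrightarrow> (f has_sum g x) (B x)"
  shows "(g has_sum s) A"
proof (rule has_sum_SigmaD)
  have "inj_on snd (Sigma A B)"
    using disj by (auto simp: inj_on_def disjoint_family_on_def)
  moreover have "snd ` Sigma A B = (\<Union>x\<in>A. B x)" by (auto simp: image_iff)
  ultimately show "((f \<circ> snd) has_sum s) (Sigma A B)" using has_sum_reindex assms(1) by metis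
  show "((\<lambda>y. (f \<circ> snd) (x, y)) has_sum g x) (B x)" if "x \<in> A" for x
    using assms(3)[OF that] by simp
qed

lemma pvm_has_sum_partition:
  assumes kg: "is_kgraph L" and pvm: "is_pvm L P"
    and countable: "\<And>x. x \<in> R \<Longrightarrow> countable (C x)" and paths: "\<And>x. C x \<subseteq> infpaths L"
    and disj: "disjoint_family_on C R"
    and sum: "((\<lambda>x. P {x} h) has_sum s) (\<Union>x\<in>R. C x)"
  shows "((\<lambda>x. P (C x) h) has_sum s) R"
proof (rule has_sum_UnionD[OF sum disj])
  fix x assume x: "x \<in> R"
  have "(\<lambda>x. P {x} h) summable_on (\<Union>x\<in>R. C x)" using sum by (rule has_sum_imp_summable)
  then have "(\<lambda>x. P {x} h) summable_on C x" by (rule summable_on_subset_banach) (use x in blast)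
  then show "((\<lambda>x. P {x} h) has_sum P (C x) h) (C x)"
    by (rule pvm_countable_has_sum_singletons[OF kg pvm countable[OF x] paths])
qed

section \<open>Cuntz-Krieger families\<close>

text \<open>The clauses are extracted one by one because (CK4) mentions \<open>t v\<close> on both sides
(\<open>v \<in> v\<Lambda>\<^sup>0\<close>): \<open>simp\<close> and \<open>blast\<close> diverge on the unfolded \<open>ck_rep\<close>.\<close>

lemma ck_repD:
  assumes "ck_rep L t"
  shows "\<forall>l\<in>Mor L. bounded_clinear (t l)"
    and "\<forall>l\<in>Mor L. \<forall>e\<in>Mor L. sr L l = rg L e \<longrightarrow> t l \<circ> t e = t (cmp L l e)"
    and "\<forall>l\<in>Mor L. adj (t l) \<circ> t l = t (sr L l)"
proof -
  note ck = assms[unfolded ck_rep_def]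
  from ck show "\<forall>l\<in>Mor L. bounded_clinear (t l)" by (elim conjE)
  from ck show "\<forall>l\<in>Mor L. \<forall>e\<in>Mor L. sr L l = rg L e \<longrightarrow> t l \<circ> t e = t (cmp L l e)"
    by (elim conjE)
  from ck show "\<forall>l\<in>Mor L. adj (t l) \<circ> t l = t (sr L l)" by (elim conjE)
qed

lemma ck_rep_bounded_linear: "ck_rep L t \<Longrightarrow> l \<in> Mor L \<Longrightarrow> bounded_linear (t l)"
  using ck_repD(1) bounded_clinear_imp_bounded_linear by blast

lemma ck_rep_cmp:
  assumes "ck_rep L t" "l \<in> Mor L" "e \<in> Mor L" "sr L l = rg L e"
  shows "t l (t e y) = t (cmp L l e) y"
proof -
  have "t l \<circ> t e = t (cmp L l e)" using ck_repD(2)[OF assms(1)] assms(2-4) by blast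
  then show ?thesis by (metis comp_apply)
qed

lemma ck_rep_adj:
  assumes "ck_rep L t" "l \<in> Mor L"
  shows "adj (t l) (t l y) = t (sr L l) y"
proof -
  have "adj (t l) \<circ> t l = t (sr L l)" using ck_repD(3)[OF assms(1)] assms(2) by blast
  then show ?thesis by (metis comp_apply)
qed

lemma ck_rep_src_absorb:
  assumes "is_kgraph L" "ck_rep L t" "l \<in> Mor L"
  shows "t l (t (sr L l) y) = t l y"
  using ck_rep_cmp[OF assms(2,3)] kgraph_unit_laws[OF assms(1,3)] by simp

lemma ck_rep_range_absorb:
  assumes "is_kgraph L" "ck_rep L t" "l \<in> Mor L"
  shows "t (rg L l) (t l y) = t l y"
  using ck_rep_cmp[OF assms(2)] kgraph_unit_laws[OF assms(1,3)] assms(3) by simp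

text \<open>Only \<open>t\<^sub>\<lambda>\<^sup>* t\<^sub>\<lambda> = t\<^bsub>s(\<lambda>)\<^esub>\<close> is used, not linearity of \<open>adj\<close>: the adjoint is
a choice and is not known to be linear from the definitions.\<close>

lemma ck_rep_src_eq_0:
  assumes "is_kgraph L" "ck_rep L t" "l \<in> Mor L" and "t l y = 0"
  shows "t (sr L l) y = 0"
proof -
  have "t l 0 = 0" "t (sr L l) 0 = 0"
    using ck_rep_bounded_linear[OF assms(2)] kgraph_unit_laws[OF assms(1,3)] assms(3)
    by (simp_all add: linear_0 bounded_linear.linear)
  then show ?thesis using ck_rep_adj[OF assms(2,3)] \<open>t l y = 0\<close> by metis
qed

lemma rep_pvm_is_pvm: "rep_pvm L t P \<Longrightarrow> is_pvm L P"
  unfolding rep_pvm_def by blast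

lemma rep_pvm_cyl: "rep_pvm L t P \<Longrightarrow> l \<in> Mor L \<Longrightarrow> P (cyl L l) y = t l (adj (t l) y)"
  unfolding rep_pvm_def by simp

lemma rep_pvm_cyl_range_absorb:
  assumes "is_kgraph L" "ck_rep L t" "rep_pvm L t P" "l \<in> Mor L"
  shows "t (rg L l) (P (cyl L l) y) = P (cyl L l) y"
  using ck_rep_range_absorb[OF assms(1,2,4)] rep_pvm_cyl[OF assms(3,4)] by simp

lemma rep_pvm_cyl_cmp_factor:
  assumes kg: "is_kgraph L" and ck: "ck_rep L t" and rp: "rep_pvm L t P"
    and l: "l \<in> Mor L" and m: "m \<in> Mor L" and lm: "sr L l = rg L m"
  shows "P (cyl L (cmp L l m)) y = t l (P (cyl L m) (adj (t l) (P (cyl L (cmp L l m)) y)))"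
proof -
  define z where "z = adj (t (cmp L l m)) y"
  have cyl_lm: "P (cyl L (cmp L l m)) y = t l (t m z)"
    unfolding z_def using rep_pvm_cyl[OF rp kgraph_cmp(1)[OF kg l m lm]] ck_rep_cmp[OF ck l m lm]
    by simp
  have "adj (t l) (t l (t m z)) = t m z"
    using ck_rep_adj[OF ck l] ck_rep_range_absorb[OF kg ck m] lm by simp
  moreover have "P (cyl L m) (t m z) = t m z"
    using rep_pvm_cyl[OF rp m] ck_rep_adj[OF ck m] ck_rep_src_absorb[OF kg ck m] by simp
  ultimately show ?thesis unfolding cyl_lm by simp
qed

lemma rep_pvm_cyl_cmp_absorb:
  assumes kg: "is_kgraph L" and ck: "ck_rep L t" and rp: "rep_pvm L t P"
    and l: "l \<in> Mor L" and m: "m \<in> Mor L" and lm: "sr L l = rg L m"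
  shows "P (cyl L (cmp L l m)) (t l (P (cyl L m) y)) = t l (P (cyl L m) y)"
proof -
  have lm_mor: "cmp L l m \<in> Mor L" and lm_sr: "sr L (cmp L l m) = sr L m"
    using kgraph_cmp[OF kg l m lm] by simp_all
  have "t l (P (cyl L m) y) = t (cmp L l m) (adj (t m) y)"
    using rep_pvm_cyl[OF rp m] ck_rep_cmp[OF ck l m lm] by simp
  moreover have "P (cyl L (cmp L l m)) (t (cmp L l m) z) = t (cmp L l m) z" for z
    using rep_pvm_cyl[OF rp lm_mor] ck_rep_adj[OF ck lm_mor] ck_rep_src_absorb[OF kg ck lm_mor] lm_sr
    by simp
  ultimately show ?thesis by simp
qed

section \<open>Shift invariance of atoms\<close>

lemma pvm_cyl_tendsto_shift:
  assumes kg: "is_kgraph L" and pvm: "is_pvm L P" and x: "x \<in> infpaths L"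
  shows "(\<lambda>n. P (cyl L (x (m, (\<lambda>_. n) + m))) h) \<longlonglongrightarrow> P {shift m x} h"
  using pvm_cyl_tendsto_singleton[OF kg pvm shift_in_infpaths[OF x, of m], where c = 0 and h = h]
  by (simp add: shift_def)

lemma pvm_shift_absorb_cyl:
  assumes kg: "is_kgraph L" and pvm: "is_pvm L P" and x: "x \<in> infpaths L"
  shows "P (cyl L (x (m, q + m))) (P {shift m x} h) = P {shift m x} h"
  using pvm_singleton_absorb_cyl[OF kg pvm shift_in_infpaths[OF x, of m], where q = q and h = h]
  by (simp add: shift_def)

lemma pvm_singleton_null_if_shift_null:
  fixes x :: "('a, 'k::finite) ipath"
  assumes kg: "is_kgraph L" and ck: "ck_rep L t" and rp: "rep_pvm L t P"
    and x: "x \<in> infpaths L" and null: "P {shift m x} = (\<lambda>_. 0)"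
  shows "P {x} = (\<lambda>_. 0)"
proof
  fix h
  have pvm: "is_pvm L P" using rp by (rule rep_pvm_is_pvm)
  define l where "l = x (0, m)"
  define mu where "mu n = x (m, (\<lambda>_. n) + m)" for n
  have l: "l \<in> Mor L" using infpath_initial_factor(1)[OF x] unfolding l_def .
  then have tl: "bounded_linear (t l)" by (rule ck_rep_bounded_linear[OF ck])
  have mu: "mu n \<in> Mor L" "sr L l = rg L (mu n)" "cmp L l (mu n) = x (0, (\<lambda>_. n) + m)" for n
    using infpath_initial_factor[OF x] unfolding l_def mu_def by simp_all
  have "P {x} h = t l (P (cyl L (mu n)) (adj (t l) (P {x} h)))" for n
  proof -
    have absorb: "P (cyl L (cmp L l (mu n))) (P {x} h) = P {x} h"
      using pvm_singleton_absorb_cyl[OF kg pvm x] mu(3) by simp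
    show ?thesis
      using rep_pvm_cyl_cmp_factor[OF kg ck rp l mu(1,2)[of n], where y = "P {x} h"]
      unfolding absorb .
  qed
  moreover have "(\<lambda>n. t l (P (cyl L (mu n)) (adj (t l) (P {x} h))))
      \<longlonglongrightarrow> t l (P {shift m x} (adj (t l) (P {x} h)))"
    unfolding mu_def by (intro bounded_linear.tendsto[OF tl] pvm_cyl_tendsto_shift[OF kg pvm x])
  ultimately have "(\<lambda>n. P {x} h) \<longlonglongrightarrow> t l 0" using null by simp
  then show "P {x} h = 0"
    using LIMSEQ_const_iff linear_0[OF bounded_linear.linear[OF tl]] by metis
qed

lemma pvm_shift_null_if_singleton_null:
  fixes x :: "('a, 'k::finite) ipath"
  assumes kg: "is_kgraph L" and ck: "ck_rep L t" and rp: "rep_pvm L t P"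
    and x: "x \<in> infpaths L" and null: "P {x} = (\<lambda>_. 0)"
  shows "P {shift m x} = (\<lambda>_. 0)"
proof
  fix h
  have pvm: "is_pvm L P" using rp by (rule rep_pvm_is_pvm)
  define l where "l = x (0, m)"
  define mu where "mu n = x (m, (\<lambda>_. n) + m)" for n
  define y where "y = P {shift m x} h"
  have l: "l \<in> Mor L" using infpath_initial_factor(1)[OF x] unfolding l_def .
  have mu: "mu n \<in> Mor L" "sr L l = rg L (mu n)" "cmp L l (mu n) = x (0, (\<lambda>_. n) + m)" for n
    using infpath_initial_factor[OF x] unfolding l_def mu_def by simp_all
  have y_absorb: "P (cyl L (mu n)) y = y" for n
    unfolding y_def mu_def by (rule pvm_shift_absorb_cyl[OF kg pvm x])
  have "t l y = P (cyl L (x (0, (\<lambda>_. n) + m))) (t l y)" for n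
    using rep_pvm_cyl_cmp_absorb[OF kg ck rp l mu(1,2)[of n], where y = y]
    unfolding y_absorb mu(3) by simp
  moreover have "(\<lambda>n. P (cyl L (x (0, (\<lambda>_. n) + m))) (t l y)) \<longlonglongrightarrow> 0"
    using pvm_cyl_tendsto_singleton[OF kg pvm x, where c = m and h = "t l y"] null by simp
  ultimately have "(\<lambda>n. t l y) \<longlonglongrightarrow> 0" by simp
  then have "t l y = 0" by (simp add: LIMSEQ_const_iff)
  then have "t (sr L l) y = 0" by (rule ck_rep_src_eq_0[OF kg ck l])
  moreover have "t (sr L l) y = y"
    using rep_pvm_cyl_range_absorb[OF kg ck rp mu(1), where y = y] y_absorb mu(2) by metis
  ultimately show "P {shift m x} h = 0" unfolding y_def by simp
qed

lemma pvm_singleton_null_shift_iff: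
  fixes x :: "('a, 'k::finite) ipath"
  assumes "is_kgraph L" "ck_rep L t" "rep_pvm L t P" "x \<in> infpaths L"
  shows "P {x} = (\<lambda>_. 0) \<longleftrightarrow> P {shift m x} = (\<lambda>_. 0)"
  using pvm_singleton_null_if_shift_null[OF assms] pvm_shift_null_if_singleton_null[OF assms] by blast

lemma pvm_singleton_null_orbit_iff:
  assumes kg: "is_kgraph L" and ck: "ck_rep L t" and rp: "rep_pvm L t P"
    and w: "w \<in> infpaths L" and g: "g \<in> infpaths L" and "orbit L w = orbit L g"
  shows "P {w} = (\<lambda>_. 0) \<longleftrightarrow> P {g} = (\<lambda>_. 0)"
proof -
  obtain m l where "shift m w = shift l g"
    using self_mem_orbit[OF w] \<open>orbit L w = orbit L g\<close> unfolding orbit_def by blast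
  then show ?thesis
    using pvm_singleton_null_shift_iff[OF kg ck rp w, of m] pvm_singleton_null_shift_iff[OF kg ck rp g, of l]
    by simp
qed

section \<open>Purely atomic representations\<close>

lemma pvm_supp_eq_atoms:
  assumes kg: "is_kgraph L" and pvm: "is_pvm L P" and Om: "Om \<in> borel_paths L"
    and null: "P (infpaths L - Om) = (\<lambda>_. 0)" and atoms: "\<forall>w\<in>Om. P {w} \<noteq> (\<lambda>_. 0)"
  shows "pvm_supp L P = Om"
proof (intro equalityI subsetI)
  interpret sigma_algebra "infpaths L" "borel_paths L" by (rule sigma_algebra_borel_paths)
  fix w assume "w \<in> pvm_supp L P"
  then have w: "w \<in> infpaths L" "P {w} \<noteq> (\<lambda>_. 0)" unfolding pvm_supp_def by auto
  have "infpaths L - Om \<in> borel_paths L" using Om by (intro Diff top)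
  show "w \<in> Om"
  proof (rule ccontr)
    assume "w \<notin> Om"
    then have "P {w} = (\<lambda>_. 0)"
      using pvm_null_subset[OF pvm \<open>infpaths L - Om \<in> borel_paths L\<close>
          singleton_in_borel_paths[OF kg w(1)] _ null] w(1) by simp
    with w(2) show False ..
  qed
next
  fix w assume "w \<in> Om"
  then show "w \<in> pvm_supp L P"
    using atoms borel_paths_subset[OF Om] unfolding pvm_supp_def by auto
qed

lemma purely_atomic_has_sum_pvm_supp:
  assumes kg: "is_kgraph L" and pvm: "is_pvm L P" and "purely_atomic L P"
  shows "((\<lambda>w. P {w} h) has_sum h) (pvm_supp L P)"
proof -
  obtain Om where Om: "Om \<in> borel_paths L" "P (infpaths L - Om) = (\<lambda>_. 0)"
    "\<forall>w\<in>Om. P {w} \<noteq> (\<lambda>_. 0)" "((\<lambda>w. P {w} h) has_sum h) Om"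
    using \<open>purely_atomic L P\<close> unfolding purely_atomic_def by blast
  then show ?thesis using pvm_supp_eq_atoms[OF kg pvm Om(1-3)] by simp
qed

lemma class_representatives:
  assumes refl: "\<And>w. w \<in> S \<Longrightarrow> w \<in> C w" and closed: "\<And>w. w \<in> S \<Longrightarrow> C w \<subseteq> S"
    and eq: "\<And>w g. w \<in> S \<Longrightarrow> g \<in> C w \<Longrightarrow> C g = C w"
  shows "\<exists>R\<subseteq>S. S = (\<Union>w\<in>R. C w) \<and> disjoint_family_on C R"
proof (intro exI conjI)
  define rep where "rep w = (SOME g. g \<in> C w)" for w
  have rep: "rep w \<in> C w" "C (rep w) = C w" if "w \<in> S" for w
    using someI[of "\<lambda>g. g \<in> C w", OF refl[OF that]] eq[OF that] unfolding rep_def by auto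
  show "rep ` S \<subseteq> S" using rep(1) closed by blast
  show "S = (\<Union>w\<in>rep ` S. C w)"
  proof (intro equalityI subsetI)
    fix w assume "w \<in> S"
    then show "w \<in> (\<Union>w\<in>rep ` S. C w)" using refl rep(2) by fastforce
  next
    fix u assume "u \<in> (\<Union>w\<in>rep ` S. C w)"
    then obtain w where "w \<in> S" "u \<in> C (rep w)" by blast
    then show "u \<in> S" using rep(2) closed by blast
  qed
  show "disjoint_family_on C (rep ` S)"
    unfolding disjoint_family_on_def
  proof (intro ballI impI)
    fix w g assume "w \<in> rep ` S" "g \<in> rep ` S" "w \<noteq> g"
    then obtain w' g' where w': "w' \<in> S" "w = rep w'" and g': "g' \<in> S" "g = rep g'" by blast
    show "C w \<inter> C g = {}"
    proof (rule ccontr)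
      assume "C w \<inter> C g \<noteq> {}"
      then obtain u where "u \<in> C w'" "u \<in> C g'" using rep(2) w' g' by auto
      then have "C w' = C g'" using eq w'(1) g'(1) by metis
      then show False using w' g' \<open>w \<noteq> g\<close> unfolding rep_def by simp
    qed
  qed
qed

lemma pvm_supp_orbit_partition:
  assumes kg: "is_kgraph L" and ck: "ck_rep L t" and rp: "rep_pvm L t P"
  shows "\<exists>R\<subseteq>pvm_supp L P. pvm_supp L P = (\<Union>w\<in>R. orbit L w) \<and> disjoint_family_on (orbit L) R"
proof (rule class_representatives)
  fix w assume w: "w \<in> pvm_supp L P"
  then have wi: "w \<in> infpaths L" unfolding pvm_supp_def by blast
  show "w \<in> orbit L w" by (rule self_mem_orbit[OF wi])
  show "orbit L g = orbit L w" if "g \<in> orbit L w" for g by (rule orbit_eq_if_mem[OF that wi])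
  show "orbit L w \<subseteq> pvm_supp L P"
  proof
    fix g assume g: "g \<in> orbit L w"
    then have gi: "g \<in> infpaths L" using orbit_subset_infpaths by blast
    have "P {g} = (\<lambda>_. 0) \<longleftrightarrow> P {w} = (\<lambda>_. 0)"
      using pvm_singleton_null_orbit_iff[OF kg ck rp gi wi orbit_eq_if_mem[OF g wi]] .
    then show "g \<in> pvm_supp L P" using w gi unfolding pvm_supp_def by simp
  qed
qed

theorem corollary3p4:
  fixes L :: "('a, 'k::finite) kgraph"
    and t :: "'a \<Rightarrow> 'h::chilbert_space \<Rightarrow> 'h"
    and P :: "('a, 'k) ipath set \<Rightarrow> 'h \<Rightarrow> 'h"
  assumes "is_kgraph L" and "row_finite L" and "no_sources L"
    and "ck_rep L t" and "rep_pvm L t P"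
  shows "(\<forall>w\<in>infpaths L. \<forall>g\<in>infpaths L. orbit L w = orbit L g \<longrightarrow>
            (P {w} = (\<lambda>_. 0) \<longleftrightarrow> P {g} = (\<lambda>_. 0)))
       \<and> (purely_atomic L P \<longrightarrow>
            (\<exists>R \<subseteq> pvm_supp L P.
               pvm_supp L P = (\<Union>w\<in>R. orbit L w) \<and>
               (\<forall>w\<in>R. \<forall>g\<in>R. w \<noteq> g \<longrightarrow> orbit L w \<inter> orbit L g = {}) \<and>
               (\<forall>w\<in>R. \<forall>g\<in>R. w \<noteq> g \<longrightarrow> P (orbit L w) \<circ> P (orbit L g) = (\<lambda>_. 0)) \<and>
               (\<forall>h. ((\<lambda>w. P (orbit L w) h) has_sum h) R)))"
proof (intro conjI impI)
  note kg = assms(1) and ck = assms(4) and rp = assms(5)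
  have pvm: "is_pvm L P" using rp by (rule rep_pvm_is_pvm)
  show "\<forall>w\<in>infpaths L. \<forall>g\<in>infpaths L. orbit L w = orbit L g \<longrightarrow>
          (P {w} = (\<lambda>_. 0) \<longleftrightarrow> P {g} = (\<lambda>_. 0))"
    using pvm_singleton_null_orbit_iff[OF kg ck rp] by blast
  assume atomic: "purely_atomic L P"
  obtain R where R: "R \<subseteq> pvm_supp L P" "pvm_supp L P = (\<Union>w\<in>R. orbit L w)"
    and disj: "disjoint_family_on (orbit L) R"
    using pvm_supp_orbit_partition[OF kg ck rp] by blast
  show "\<exists>R \<subseteq> pvm_supp L P. pvm_supp L P = (\<Union>w\<in>R. orbit L w) \<and>
          (\<forall>w\<in>R. \<forall>g\<in>R. w \<noteq> g \<longrightarrow> orbit L w \<inter> orbit L g = {}) \<and>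
          (\<forall>w\<in>R. \<forall>g\<in>R. w \<noteq> g \<longrightarrow> P (orbit L w) \<circ> P (orbit L g) = (\<lambda>_. 0)) \<and>
          (\<forall>h. ((\<lambda>w. P (orbit L w) h) has_sum h) R)"
  proof (intro exI[of _ R] conjI ballI impI allI R)
    fix w g assume "w \<in> R" "g \<in> R" "w \<noteq> g"
    then show "orbit L w \<inter> orbit L g = {}" using disj by (simp add: disjoint_family_on_def)
    then show "P (orbit L w) \<circ> P (orbit L g) = (\<lambda>_. 0)"
      using pvm_orthogonal[OF pvm orbit_in_borel_paths[OF kg] orbit_in_borel_paths[OF kg]]
      by (simp add: fun_eq_iff)
  next
    fix h
    have "((\<lambda>w. P {w} h) has_sum h) (\<Union>w\<in>R. orbit L w)"
      using purely_atomic_has_sum_pvm_supp[OF kg pvm atomic] R(2) by simp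
    then show "((\<lambda>w. P (orbit L w) h) has_sum h) R"
      by (rule pvm_has_sum_partition[OF kg pvm countable_orbit[OF kg] orbit_subset_infpaths disj])
  qed
qed

end
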